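(* Let $M$ be a $\mathfrak D$-module (not necessarily a weight module) on which the subalgebra $\mathfrak D^+$ acts locally finitely. Then: (i) $M$ contains a nonzero vector $v$ such that $\mathfrak D^+v\subseteq\mathbb Cv$; (ii) if $M$ is simple, then $M$ is a Whittaker module or a highest weight module.
   Context: $\mathfrak D$ is the Lie algebra with basis $\{d_m,h_r,\mathbf c_1,\mathbf c_2:m\in\mathbb Z,r\in\frac12+\mathbb Z\}$ and brackets $[d_m,d_n]=(m-n)d_{m+n}+\delta_{m+n,0}\frac{m^3-m}{12}\mathbf c_1$, $[d_m,h_r]=-rh_{m+r}$, $[h_r,h_s]=r\delta_{r+s,0}\mathbf c_2$, with $\mathbf c_1,\mathbf c_2$ central. $\mathfrak D^{\pm}=\bigoplus_{n\ge1}\mathbb Cd_{\pm n}\oplus\bigoplus_{r\in\frac12+\mathbb N}\mathbb Ch_{\pm r}$, $\mathfrak D^0=\mathbb Cd_0\oplus\mathbb C\mathbf c_1\oplus\mathbb C\mathbf c_2$. $\mathfrak D^+$ acts locally finitely on $M$ if every vector lies in a finite-dimensional $\mathfrak D^+$-submodule. A Whittaker module is a module generated by a nonzero vector $v$ with $xv=\varphi(x)v$ ($x\in\mathfrak D^+$) for some Lie algebra homomorphism $\varphi:\mathfrak D^+\to\mathbb C$; a highest weight module is a module generated by a nonzero vector $v$ with $\mathfrak D^+v=0$ and $\mathfrak D^0v\subseteq\mathbb Cv$. *)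

theory Defs
  imports Complex_Main
begin

text \<open>A module over the Lie algebra D is a complex vector space (type 'v with the
scalar multiplication scl) together with linear operators representing the basis
elements: d m = d_m, h k = h_{k+1/2} (so k ranges over all integers and
r = k + 1/2 over 1/2 + Z), c1, c2, satisfying the bracket relations.\<close>

definition D_module ::
  "(complex \<Rightarrow> 'v::ab_group_add \<Rightarrow> 'v) \<Rightarrow> (int \<Rightarrow> 'v \<Rightarrow> 'v) \<Rightarrow> (int \<Rightarrow> 'v \<Rightarrow> 'v)
     \<Rightarrow> ('v \<Rightarrow> 'v) \<Rightarrow> ('v \<Rightarrow> 'v) \<Rightarrow> bool" where
  "D_module scl d h c1 c2 \<longleftrightarrow>
     vector_space scl \<and>
     (\<forall>m. Vector_Spaces.linear scl scl (d m)) \<and> (\<forall>k. Vector_Spaces.linear scl scl (h k)) \<and>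
     Vector_Spaces.linear scl scl c1 \<and> Vector_Spaces.linear scl scl c2 \<and>
     (\<forall>m n x. d m (d n x) - d n (d m x) =
        scl (of_int (m - n)) (d (m + n) x) +
        (if m + n = 0 then scl (of_int (m^3 - m) / 12) (c1 x) else 0)) \<and>
     (\<forall>m k x. d m (h k x) - h k (d m x) = scl (- (of_int k + 1/2)) (h (m + k) x)) \<and>
     (\<forall>k l x. h k (h l x) - h l (h k x) =
        (if k + l + 1 = 0 then scl (of_int k + 1/2) (c2 x) else 0)) \<and>
     (\<forall>m x. c1 (d m x) = d m (c1 x) \<and> c2 (d m x) = d m (c2 x)) \<and>
     (\<forall>k x. c1 (h k x) = h k (c1 x) \<and> c2 (h k x) = h k (c2 x)) \<and>
     (\<forall>x. c1 (c2 x) = c2 (c1 x))"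

definition D_submodule ::
  "(complex \<Rightarrow> 'v::ab_group_add \<Rightarrow> 'v) \<Rightarrow> (int \<Rightarrow> 'v \<Rightarrow> 'v) \<Rightarrow> (int \<Rightarrow> 'v \<Rightarrow> 'v)
     \<Rightarrow> ('v \<Rightarrow> 'v) \<Rightarrow> ('v \<Rightarrow> 'v) \<Rightarrow> 'v set \<Rightarrow> bool" where
  "D_submodule scl d h c1 c2 W \<longleftrightarrow>
     module.subspace scl W \<and>
     (\<forall>m. \<forall>x\<in>W. d m x \<in> W) \<and> (\<forall>k. \<forall>x\<in>W. h k x \<in> W) \<and>
     (\<forall>x\<in>W. c1 x \<in> W) \<and> (\<forall>x\<in>W. c2 x \<in> W)"

definition D_simple ::
  "(complex \<Rightarrow> 'v::ab_group_add \<Rightarrow> 'v) \<Rightarrow> (int \<Rightarrow> 'v \<Rightarrow> 'v) \<Rightarrow> (int \<Rightarrow> 'v \<Rightarrow> 'v)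
     \<Rightarrow> ('v \<Rightarrow> 'v) \<Rightarrow> ('v \<Rightarrow> 'v) \<Rightarrow> bool" where
  "D_simple scl d h c1 c2 \<longleftrightarrow> (\<exists>x::'v. x \<noteq> 0) \<and>
     (\<forall>W. D_submodule scl d h c1 c2 W \<longrightarrow> W = {0} \<or> W = UNIV)"

text \<open>D^+ is spanned by d_n (n \<ge> 1) and h_{k+1/2} (k \<ge> 0).
D^+ acts locally finitely: every vector lies in a finite-dimensional D^+-submodule.\<close>
definition Dplus_locally_finite where
  "Dplus_locally_finite scl d h \<longleftrightarrow>
     (\<forall>v::'v::ab_group_add. \<exists>W. module.subspace scl W \<and> v \<in> W \<and>
        (\<exists>B. finite B \<and> W = module.span scl B) \<and>
        (\<forall>n\<ge>1. \<forall>x\<in>W. d n x \<in> W) \<and> (\<forall>k\<ge>0. \<forall>x\<in>W. h k x \<in> W))"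

definition D_generated_by where
  "D_generated_by scl d h c1 c2 (v::'v::ab_group_add) \<longleftrightarrow>
     (\<forall>W. D_submodule scl d h c1 c2 W \<and> v \<in> W \<longrightarrow> W = UNIV)"

text \<open>A linear map phi : D^+ \<rightarrow> C, given on the basis by phid n = phi(d_n) (n \<ge> 1)
and phih k = phi(h_{k+1/2}) (k \<ge> 0), is a Lie algebra homomorphism iff it kills
all brackets of basis elements of D^+ (C being abelian).\<close>
definition Dplus_lie_hom :: "(int \<Rightarrow> complex) \<Rightarrow> (int \<Rightarrow> complex) \<Rightarrow> bool" where
  "Dplus_lie_hom phid phih \<longleftrightarrow>
     (\<forall>m\<ge>1. \<forall>n\<ge>1. of_int (m - n) * phid (m + n) = 0) \<and>
     (\<forall>m\<ge>1. \<forall>k\<ge>0. - (of_int k + 1/2) * phih (m + k) = 0)"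

definition Whittaker_module where
  "Whittaker_module scl d h c1 c2 \<longleftrightarrow>
     (\<exists>v::'v::ab_group_add. v \<noteq> 0 \<and> D_generated_by scl d h c1 c2 v \<and>
        (\<exists>phid phih. Dplus_lie_hom phid phih \<and>
           (\<forall>n\<ge>1. d n v = scl (phid n) v) \<and> (\<forall>k\<ge>0. h k v = scl (phih k) v)))"

definition highest_weight_module where
  "highest_weight_module scl d h c1 c2 \<longleftrightarrow>
     (\<exists>v::'v::ab_group_add. v \<noteq> 0 \<and> D_generated_by scl d h c1 c2 v \<and>
        (\<forall>n\<ge>1. d n v = 0) \<and> (\<forall>k\<ge>0. h k v = 0) \<and>
        (\<exists>a. d 0 v = scl a v) \<and> (\<exists>a. c1 v = scl a v) \<and> (\<exists>a. c2 v = scl a v))"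

end

theory Submission
  imports Defs "HOL-Library.Function_Algebras" "HOL-Computational_Algebra.Fundamental_Theorem_Algebra"
begin

(* Every vector lies in a finite-dimensional D^+-stable subspace W. On W the operators d_1, d_2, ...
   satisfy a nontrivial linear relation; bracketing it with suitable d_m shortens it, so some d_N and
   then all d_n, h_(k+1/2) of large index vanish on W. Give d_n degree 2n and h_(k+1/2) degree 2k+1 and
   descend degree by degree: the generator of degree t is, up to a nonzero scalar, a commutator [d_1, x]
   of two operators with which it commutes on the part of W killed by all higher generators, so it has
   a nonzero kernel vector there (if [S, A] is a nonzero scalar on an A-stable finite-dimensional space,
   S is injective on it). Finally only d_1, d_2, h_(1/2) act nontrivially, and they commute,
   so they have a common eigenvector v; then D^+ v lies in C v. If M is simple, v generates M and its
   eigenvalues form a Lie homomorphism D^+ -> C, so M is a Whittaker module. *)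

section \<open>Polynomials in a linear operator, eigenvectors and commutators\<close>

lemma sum_fun_apply: "(\<Sum>i\<in>A. f i) x = (\<Sum>i\<in>A. f i x)"
  by (induct A rule: infinite_finite_induct) auto

(* A locale of its own: definitions made in the context of vector_space clash with its global
   real_vector interpretation. *)
locale complex_vector_space = vector_space scl for scl :: "complex \<Rightarrow> 'v::ab_group_add \<Rightarrow> 'v"
begin

sublocale pair: vector_space_pair scl scl ..

abbreviation linear_op :: "('v \<Rightarrow> 'v) \<Rightarrow> bool" where
  "linear_op \<equiv> Vector_Spaces.linear scl scl"

definition finite_dim :: "'v set \<Rightarrow> bool" where
  "finite_dim U \<longleftrightarrow> (\<exists>G. finite G \<and> U \<subseteq> span G)"

lemma finite_dim_subset: "finite_dim U \<Longrightarrow> V \<subseteq> U \<Longrightarrow> finite_dim V"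
  unfolding finite_dim_def by blast

lemma finite_dim_obtain_basis:
  assumes "subspace W" "finite_dim W"
  obtains G where "finite G" "W = span G"
proof -
  obtain H where H: "finite H" "W \<subseteq> span H" using assms(2) finite_dim_def by blast
  obtain G where G: "G \<subseteq> W" "independent G" "W \<subseteq> span G" by (rule basis_exists)
  have "finite G" using independent_span_bound[OF H(1) G(2)] G(1) H(2) by blast
  moreover have "W = span G" using G(1,3) span_minimal[OF G(1) assms(1)] by blast
  ultimately show thesis by (rule that)
qed

(* poly_comb p (\<lambda>i. (T ^^ i) x) is p(T) x. *)
definition poly_comb :: "complex poly \<Rightarrow> (nat \<Rightarrow> 'v) \<Rightarrow> 'v" where
  "poly_comb p f = (\<Sum>i\<le>degree p. scl (coeff p i) (f i))"

lemma poly_comb_bound: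
  assumes "degree p \<le> n"
  shows "poly_comb p f = (\<Sum>i\<le>n. scl (coeff p i) (f i))"
  unfolding poly_comb_def
  by (rule sum.mono_neutral_left) (use assms in \<open>auto simp: coeff_eq_0\<close>)

lemma poly_comb_const: "degree p = 0 \<Longrightarrow> poly_comb p f = scl (coeff p 0) (f 0)"
  by (simp add: poly_comb_def)

lemma poly_comb_add: "poly_comb (p + q) f = poly_comb p f + poly_comb q f"
proof -
  let ?n = "max (degree p) (degree q)"
  have "degree (p + q) \<le> ?n" by (rule degree_add_le_max)
  then show ?thesis
    by (simp add: poly_comb_bound[of _ ?n] scale_left_distrib sum.distrib)
qed

lemma poly_comb_smult: "poly_comb (smult c p) f = scl c (poly_comb p f)"
  by (simp add: poly_comb_bound[OF degree_smult_le] poly_comb_def scale_sum_right)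

lemma poly_comb_pCons_0: "poly_comb (pCons 0 p) f = poly_comb p (\<lambda>i. f (Suc i))"
proof -
  have "degree (pCons 0 p) \<le> Suc (degree p)" by (simp add: degree_pCons_le)
  then have "poly_comb (pCons 0 p) f = (\<Sum>i\<le>Suc (degree p). scl (coeff (pCons 0 p) i) (f i))"
    by (rule poly_comb_bound)
  also have "\<dots> = poly_comb p (\<lambda>i. f (Suc i))"
    by (simp only: sum.atMost_Suc_shift) (simp add: poly_comb_def)
  finally show ?thesis .
qed

lemma poly_comb_add_right: "poly_comb p (\<lambda>i. f i + g i) = poly_comb p f + poly_comb p g"
  by (simp add: poly_comb_def scale_right_distrib sum.distrib)

lemma poly_comb_diff_right: "poly_comb p (\<lambda>i. f i - g i) = poly_comb p f - poly_comb p g"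
  by (simp add: poly_comb_def scale_right_diff_distrib sum_subtractf)

lemma poly_comb_scale_right: "poly_comb p (\<lambda>i. scl c (f i)) = scl c (poly_comb p f)"
  by (simp add: poly_comb_def scale_sum_right mult.commute)

lemma poly_comb_pderiv:
  "poly_comb p (\<lambda>i. scl (of_nat i) (f i)) = poly_comb (pderiv p) (\<lambda>i. f (Suc i))"
proof -
  have "degree p \<le> Suc (degree p)" by simp
  then have "poly_comb p (\<lambda>i. scl (of_nat i) (f i)) =
      (\<Sum>i\<le>Suc (degree p). scl (coeff p i) (scl (of_nat i) (f i)))"
    by (rule poly_comb_bound)
  also have "\<dots> = (\<Sum>i\<le>degree p. scl (coeff (pderiv p) i) (f (Suc i)))"
    by (simp only: sum.atMost_Suc_shift) (simp add: coeff_pderiv mult.commute)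
  also have "\<dots> = poly_comb (pderiv p) (\<lambda>i. f (Suc i))"
    by (rule poly_comb_bound[symmetric]) (simp add: degree_pderiv)
  finally show ?thesis .
qed

lemma poly_comb_linear: "linear_op T \<Longrightarrow> T (poly_comb p f) = poly_comb p (\<lambda>i. T (f i))"
  by (simp add: poly_comb_def pair.linear_sum pair.linear_scale)

lemma subspace_poly_comb: "subspace U \<Longrightarrow> (\<And>i. f i \<in> U) \<Longrightarrow> poly_comb p f \<in> U"
  unfolding poly_comb_def by (intro subspace_sum subspace_scale)

lemma dependent_family:
  fixes f :: "nat \<Rightarrow> 'v"
  assumes "finite G" "\<And>i. f i \<in> span G"
  shows "\<exists>a. (\<exists>i\<le>card G. a i \<noteq> 0) \<and> (\<Sum>i\<le>card G. scl (a i) (f i)) = 0"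
proof (cases "inj_on f {..card G}")
  case True
  have "dependent (f ` {..card G})"
  proof (rule ccontr)
    assume "\<not> dependent (f ` {..card G})"
    then have "card (f ` {..card G}) \<le> card G"
      using independent_span_bound[OF assms(1)] assms(2) by blast
    then show False using True by (simp add: card_image)
  qed
  then obtain u where u: "\<exists>v\<in>f ` {..card G}. u v \<noteq> 0" "(\<Sum>v\<in>f ` {..card G}. scl (u v) v) = 0"
    by (auto simp: dependent_finite)
  then show ?thesis
    using True by (intro exI[of _ "u \<circ> f"]) (auto simp: sum.reindex)
next
  case False
  then obtain i j where ij: "i \<le> card G" "j \<le> card G" "i \<noteq> j" "f i = f j"
    by (auto simp: inj_on_def)
  define a :: "nat \<Rightarrow> complex" where "a k = (if k = i then 1 else if k = j then -1 else 0)" for k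
  have "(\<Sum>k\<le>card G. scl (a k) (f k)) = (\<Sum>k\<in>{i, j}. scl (a k) (f k))"
    by (rule sum.mono_neutral_right) (use ij in \<open>auto simp: a_def\<close>)
  also have "\<dots> = 0" using ij by (simp add: a_def)
  finally show ?thesis using ij by (intro exI[of _ a]) (auto simp: a_def)
qed

lemma annihilating_poly_exists:
  assumes "finite G" "\<And>i. f i \<in> span G"
  shows "\<exists>p. p \<noteq> 0 \<and> poly_comb p f = 0"
proof -
  obtain a where a: "\<exists>i\<le>card G. a i \<noteq> 0" "(\<Sum>i\<le>card G. scl (a i) (f i)) = 0"
    using dependent_family[of G f] assms by blast
  define p where "p = (\<Sum>i\<le>card G. monom (a i) i)"
  have coeff_p: "coeff p i = (if i \<le> card G then a i else 0)" for i
    by (simp add: p_def coeff_sum)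
  have "degree p \<le> card G" by (rule degree_le) (simp add: coeff_p)
  then have "poly_comb p f = (\<Sum>i\<le>card G. scl (a i) (f i))"
    by (simp add: poly_comb_bound[of p "card G"] coeff_p)
  then have "poly_comb p f = 0" using a(2) by simp
  moreover have "p \<noteq> 0" using a(1) by (auto simp: poly_eq_iff coeff_p)
  ultimately show ?thesis by blast
qed

lemma minimal_annihilating_poly:
  assumes "finite_dim U" "\<And>i. f i \<in> U" "f 0 \<noteq> 0"
  obtains p where "p \<noteq> 0" "poly_comb p f = 0" "degree p > 0"
    "\<And>q. degree q < degree p \<Longrightarrow> poly_comb q f = 0 \<Longrightarrow> q = 0"
proof -
  obtain G where "finite G" "U \<subseteq> span G" using assms(1) finite_dim_def by blast
  then obtain p0 where "p0 \<noteq> 0 \<and> poly_comb p0 f = 0"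
    using annihilating_poly_exists[of G f] assms(2) by blast
  then obtain p where p: "p \<noteq> 0 \<and> poly_comb p f = 0"
    and least: "\<forall>q. q \<noteq> 0 \<and> poly_comb q f = 0 \<longrightarrow> degree p \<le> degree q"
    using ex_has_least_nat[of "\<lambda>p. p \<noteq> 0 \<and> poly_comb p f = 0" p0 degree] by blast
  have "degree p > 0"
  proof (rule ccontr)
    assume "\<not> degree p > 0"
    then have "poly_comb p f = scl (lead_coeff p) (f 0)" by (simp add: poly_comb_const)
    then show False using p assms(3) by simp
  qed
  moreover have "q = 0" if "degree q < degree p" "poly_comb q f = 0" for q
    using least that by force
  ultimately show thesis using p that by blast
qed

lemma linear_op_poly_comb:
  assumes "\<And>i. linear_op (T i)"
  shows "linear_op (\<lambda>x. poly_comb p (\<lambda>i. T i x))"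
  unfolding poly_comb_def
  by (intro pair.linear_compose_sum ballI pair.linear_compose_scale_right assms)

(* The restrictions of the T i to a finite basis G of W live in the finite-dimensional space spanned
   by the functions supported at one point of G with a value in G. *)
lemma operators_poly_relation:
  fixes T :: "nat \<Rightarrow> 'v \<Rightarrow> 'v"
  assumes "subspace W" "finite_dim W" "\<And>i. linear_op (T i)" "\<And>i. T i ` W \<subseteq> W"
  shows "\<exists>p. p \<noteq> 0 \<and> (\<forall>x\<in>W. poly_comb p (\<lambda>i. T i x) = 0)"
proof -
  obtain G where G: "finite G" "W = span G" using finite_dim_obtain_basis[OF assms(1,2)] .
  interpret F: complex_vector_space "\<lambda>c (f :: 'v \<Rightarrow> 'v) x. scl c (f x)"
    by unfold_locales (simp_all add: fun_eq_iff scale_right_distrib scale_left_distrib)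
  define point where "point b y = (\<lambda>x. if x = b then y else 0)" for b y :: 'v
  define restr where "restr i = (\<lambda>x. if x \<in> G then T i x else 0)" for i
  have point_span: "point b y \<in> F.span (case_prod point ` (G \<times> G))" if "b \<in> G" "y \<in> span G" for b y
  proof -
    obtain u where "y = (\<Sum>g\<in>G. scl (u g) g)" using \<open>y \<in> span G\<close> span_finite[OF G(1)] by auto
    then have "point b y = (\<Sum>g\<in>G. (\<lambda>x. scl (u g) (point b g x)))"
      by (simp add: fun_eq_iff point_def sum_fun_apply)
    also have "\<dots> \<in> F.span (case_prod point ` (G \<times> G))"
      by (intro F.span_sum F.span_scale F.span_base) (auto simp: that(1))
    finally show ?thesis .
  qed
  have "restr i \<in> F.span (case_prod point ` (G \<times> G))" for i
  proof -
    have "restr i = (\<Sum>b\<in>G. point b (T i b))"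
      using G(1) by (auto simp: fun_eq_iff restr_def point_def sum_fun_apply)
    moreover have "T i b \<in> span G" if "b \<in> G" for b
      using assms(4) that G(2) span_base by blast
    ultimately show ?thesis by (simp add: F.span_sum point_span)
  qed
  then obtain p where p: "p \<noteq> 0" "F.poly_comb p restr = 0"
    using F.annihilating_poly_exists[of "case_prod point ` (G \<times> G)" restr] G(1) by blast
  have "poly_comb p (\<lambda>i. T i b) = 0" if "b \<in> G" for b
    using fun_cong[OF p(2), of b] that
    by (simp add: F.poly_comb_def poly_comb_def sum_fun_apply restr_def)
  then have "\<forall>x\<in>span G. poly_comb p (\<lambda>i. T i x) = 0"
    using pair.linear_eq_0_on_span[OF linear_op_poly_comb, of T] assms(3) by blast
  with p(1) G(2) show ?thesis by blast
qed

lemma eigenvector_exists: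
  assumes "subspace U" "finite_dim U" "u \<in> U" "u \<noteq> 0" "linear_op T" "T ` U \<subseteq> U"
  shows "\<exists>w\<in>U. w \<noteq> 0 \<and> (\<exists>r. T w = scl r w)"
proof -
  have orbit: "(T ^^ i) u \<in> U" for i
    by (induct i) (use assms(3,6) in auto)
  obtain p where p: "p \<noteq> 0" "poly_comb p (\<lambda>i. (T ^^ i) u) = 0" "degree p > 0"
    and minimal: "\<And>q. degree q < degree p \<Longrightarrow> poly_comb q (\<lambda>i. (T ^^ i) u) = 0 \<Longrightarrow> q = 0"
    using minimal_annihilating_poly[of U "\<lambda>i. (T ^^ i) u"] assms(2,4) orbit by auto
  obtain r where "poly p r = 0"
    using fundamental_theorem_of_algebra[of p] p(3) by (auto simp: constant_degree)
  then obtain q where pq: "p = [:-r, 1:] * q"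
    by (auto simp: poly_eq_0_iff_dvd elim: dvdE)
  have "q \<noteq> 0" using p(1) pq by auto
  then have "degree q < degree p" unfolding pq by (subst degree_mult_eq) auto
  define w where "w = poly_comb q (\<lambda>i. (T ^^ i) u)"
  have "w \<noteq> 0" using minimal \<open>q \<noteq> 0\<close> \<open>degree q < degree p\<close> by (auto simp: w_def)
  moreover have "w \<in> U" unfolding w_def by (rule subspace_poly_comb[OF assms(1) orbit])
  moreover have "T w - scl r w = 0"
  proof -
    have "p = pCons 0 q + smult (- r) q" by (simp add: pq)
    then have "poly_comb p (\<lambda>i. (T ^^ i) u) =
        poly_comb (pCons 0 q) (\<lambda>i. (T ^^ i) u) + poly_comb (smult (- r) q) (\<lambda>i. (T ^^ i) u)"
      by (simp only: poly_comb_add)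
    also have "\<dots> = T w - scl r w"
      unfolding poly_comb_smult poly_comb_pCons_0 by (simp add: w_def poly_comb_linear[OF assms(5)])
    finally have "poly_comb p (\<lambda>i. (T ^^ i) u) = T w - scl r w" .
    then show ?thesis using p(2) by simp
  qed
  ultimately show ?thesis by auto
qed

lemma subspace_eigenspace:
  assumes "subspace U" "linear_op T"
  shows "subspace {x\<in>U. T x = scl c x}"
  using assms unfolding subspace_def
  by (auto simp: pair.linear_add pair.linear_scale pair.linear_0 scale_right_distrib scale_left_commute)

lemma eigenspace_invariant:
  assumes "linear_op S" "S ` U \<subseteq> U" "\<And>x. x \<in> U \<Longrightarrow> T (S x) = S (T x)"
  shows "S ` {x\<in>U. T x = scl c x} \<subseteq> {x\<in>U. T x = scl c x}"
  using assms by (auto simp: pair.linear_scale)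

lemma common_eigenvector:
  assumes "finite Ts" "subspace U" "finite_dim U" "u \<in> U" "u \<noteq> 0"
    and "\<And>T. T \<in> Ts \<Longrightarrow> linear_op T" "\<And>T. T \<in> Ts \<Longrightarrow> T ` U \<subseteq> U"
    and "\<And>S T x. S \<in> Ts \<Longrightarrow> T \<in> Ts \<Longrightarrow> x \<in> U \<Longrightarrow> S (T x) = T (S x)"
  shows "\<exists>w\<in>U. w \<noteq> 0 \<and> (\<forall>T\<in>Ts. \<exists>r. T w = scl r w)"
  using assms(1) assms(2-)
proof (induction Ts arbitrary: U u rule: finite_induct)
  case empty
  then show ?case by blast
next
  case (insert T Ts)
  obtain w r where w: "w \<in> U" "w \<noteq> 0" "T w = scl r w"
    using eigenvector_exists[of U u T] insert.prems by auto
  define E where "E = {x\<in>U. T x = scl r x}"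
  have "subspace E" unfolding E_def by (rule subspace_eigenspace) (use insert.prems in auto)
  moreover have "finite_dim E" using insert.prems(2) finite_dim_subset by (auto simp: E_def)
  moreover have "S ` E \<subseteq> E" if "S \<in> Ts" for S
    unfolding E_def by (rule eigenspace_invariant) (use insert.prems that in auto)
  ultimately obtain v where "v \<in> E" "v \<noteq> 0" "\<forall>S\<in>Ts. \<exists>c. S v = scl c v"
    using insert.IH[of E w] w insert.prems by (auto simp: E_def)
  then show ?case by (auto simp: E_def)
qed

lemma scalar_commutator_poly_comb:
  assumes "linear_op S" "linear_op A" "A ` E \<subseteq> E" "u \<in> E" "S u = 0"
    and "\<And>x. x \<in> E \<Longrightarrow> S (A x) - A (S x) = scl a x"
  shows "S (poly_comb p (\<lambda>i. (A ^^ i) u)) = scl a (poly_comb (pderiv p) (\<lambda>i. (A ^^ i) u))"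
proof -
  have orbit: "(A ^^ i) u \<in> E" for i
    by (induct i) (use assms(3,4) in auto)
  have powers: "S ((A ^^ Suc i) u) = scl (of_nat (Suc i)) (scl a ((A ^^ i) u))" for i
  proof (induct i)
    case 0
    then show ?case using assms(6)[OF assms(4)] assms(5) pair.linear_0[OF assms(2)] by simp
  next
    case (Suc i)
    have "S ((A ^^ Suc (Suc i)) u) = A (S ((A ^^ Suc i) u)) + scl a ((A ^^ Suc i) u)"
      using assms(6)[OF orbit[of "Suc i"]] by (simp add: algebra_simps)
    also have "\<dots> = scl (of_nat (Suc i)) (scl a ((A ^^ Suc i) u)) + scl a ((A ^^ Suc i) u)"
      unfolding Suc by (simp only: pair.linear_scale[OF assms(2)] funpow.simps comp_apply)
    also have "\<dots> = scl (of_nat (Suc (Suc i))) (scl a ((A ^^ Suc i) u))"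
      by (simp only: of_nat_Suc[of "Suc i"] scale_left_distrib scale_one add.commute)
    finally show ?case .
  qed
  have "S (poly_comb p (\<lambda>i. (A ^^ i) u)) = poly_comb p (\<lambda>i. S ((A ^^ i) u))"
    by (rule poly_comb_linear[OF assms(1)])
  also have "\<dots> = poly_comb p (\<lambda>i. scl (of_nat i) (scl a ((A ^^ (i - 1)) u)))"
  proof -
    have "S ((A ^^ i) u) = scl (of_nat i) (scl a ((A ^^ (i - 1)) u))" for i
      by (cases i) (simp_all add: assms(5) powers del: funpow.simps)
    then show ?thesis by simp
  qed
  also have "\<dots> = scl a (poly_comb (pderiv p) (\<lambda>i. (A ^^ i) u))"
    unfolding poly_comb_pderiv diff_Suc_1 poly_comb_scale_right ..
  finally show ?thesis .
qed

(* [S, p(A)] u = a p'(A) u, so the minimal annihilating polynomial of u would have its derivative as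
   a smaller one. *)
lemma scalar_commutator_kernel:
  assumes "finite_dim E" "linear_op S" "linear_op A" "A ` E \<subseteq> E" "u \<in> E" "S u = 0"
    and "\<And>x. x \<in> E \<Longrightarrow> S (A x) - A (S x) = scl a x" "a \<noteq> 0"
  shows "u = 0"
proof (rule ccontr)
  assume "u \<noteq> 0"
  have orbit: "(A ^^ i) u \<in> E" for i
    by (induct i) (use assms(4,5) in auto)
  obtain p where p: "p \<noteq> 0" "poly_comb p (\<lambda>i. (A ^^ i) u) = 0" "degree p > 0"
    and minimal: "\<And>q. degree q < degree p \<Longrightarrow> poly_comb q (\<lambda>i. (A ^^ i) u) = 0 \<Longrightarrow> q = 0"
    using minimal_annihilating_poly[of E "\<lambda>i. (A ^^ i) u"] assms(1) orbit \<open>u \<noteq> 0\<close> by auto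
  have "scl a (poly_comb (pderiv p) (\<lambda>i. (A ^^ i) u)) = 0"
    using scalar_commutator_poly_comb[OF assms(2-7), of p] p(2) pair.linear_0[OF assms(2)] by simp
  then have "pderiv p = 0"
    using minimal[of "pderiv p"] p(3) assms(8) by (simp add: degree_pderiv)
  then show False using p(3) by (simp add: pderiv_eq_0_iff)
qed

lemma commutator_kernel:
  assumes "subspace U" "finite_dim U" "u \<in> U" "u \<noteq> 0"
    and "linear_op A" "linear_op B" "linear_op C" "A ` U \<subseteq> U" "B ` U \<subseteq> U" "C ` U \<subseteq> U"
    and "\<And>x. x \<in> U \<Longrightarrow> A (B x) - B (A x) = scl c (C x)" "c \<noteq> 0"
    and "\<And>x. x \<in> U \<Longrightarrow> C (A x) = A (C x)" "\<And>x. x \<in> U \<Longrightarrow> C (B x) = B (C x)"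
  shows "\<exists>w\<in>U. w \<noteq> 0 \<and> C w = 0"
proof -
  (* On an eigenspace of C with eigenvalue e \<noteq> 0, B - \<mu> would have a kernel and commutator -c e with A. *)
  obtain w e where w: "w \<in> U" "w \<noteq> 0" "C w = scl e w"
    using eigenvector_exists[of U u C] assms by auto
  show ?thesis
  proof (cases "e = 0")
    case True
    then show ?thesis using w by auto
  next
    case False
    define E where "E = {x\<in>U. C x = scl e x}"
    have E: "subspace E" "finite_dim E" "A ` E \<subseteq> E" "B ` E \<subseteq> E"
      using subspace_eigenspace[of U C] eigenspace_invariant[of A U C] eigenspace_invariant[of B U C]
        finite_dim_subset[of U E] assms
      by (auto simp: E_def)
    obtain v \<mu> where v: "v \<in> E" "v \<noteq> 0" "B v = scl \<mu> v"
      using eigenvector_exists[of E w B] E w assms(6) by (auto simp: E_def)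
    define S where "S x = B x - scl \<mu> x" for x
    have S: "linear_op S"
      unfolding S_def by (intro pair.linear_compose_sub assms(6) linear_scale_self)
    have Sv: "S v = 0" using v(3) by (simp add: S_def)
    have "S (A x) - A (S x) = scl (- (c * e)) x" if "x \<in> E" for x
      using that assms(11) by (auto simp: S_def E_def pair.linear_diff[OF assms(5)]
          pair.linear_scale[OF assms(5)] algebra_simps)
    moreover have "- (c * e) \<noteq> 0" using \<open>e \<noteq> 0\<close> assms(12) by simp
    ultimately have "v = 0" by (rule scalar_commutator_kernel[OF E(2) S assms(5) E(3) v(1) Sv])
    then show ?thesis using v(2) by contradiction
  qed
qed

end

section \<open>Finite-dimensional modules over the positive part\<close>

lemma half_integer_nonzero: "(of_int k + 1/2 :: complex) \<noteq> 0"
proof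
  assume "(of_int k + 1/2 :: complex) = 0"
  then have "(of_int (2 * k + 1) :: complex) = 0" by (simp add: field_simps)
  then have "2 * k + 1 = 0" by (simp only: of_int_eq_0_iff)
  then show False by presburger
qed

locale Dplus_module = complex_vector_space scl for scl :: "complex \<Rightarrow> 'v::ab_group_add \<Rightarrow> 'v" +
  fixes d h :: "int \<Rightarrow> 'v \<Rightarrow> 'v"
  assumes linear_d: "n \<ge> 1 \<Longrightarrow> linear_op (d n)"
    and linear_h: "k \<ge> 0 \<Longrightarrow> linear_op (h k)"
    and bracket_d_d: "m \<ge> 1 \<Longrightarrow> n \<ge> 1 \<Longrightarrow>
      d m (d n x) - d n (d m x) = scl (of_int (m - n)) (d (m + n) x)"
    and bracket_d_h: "m \<ge> 1 \<Longrightarrow> k \<ge> 0 \<Longrightarrow>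
      d m (h k x) - h k (d m x) = scl (- (of_int k + 1/2)) (h (m + k) x)"
    and bracket_h_h: "k \<ge> 0 \<Longrightarrow> l \<ge> 0 \<Longrightarrow> h k (h l x) = h l (h k x)"
begin

lemma eigenvalues_lie_hom:
  assumes "v \<noteq> 0" "\<And>n. n \<ge> 1 \<Longrightarrow> d n v = scl (phid n) v" "\<And>k. k \<ge> 0 \<Longrightarrow> h k v = scl (phih k) v"
  shows "Dplus_lie_hom phid phih"
  unfolding Dplus_lie_hom_def
proof (intro conjI allI impI)
  fix m n :: int
  assume mn: "m \<ge> 1" "n \<ge> 1"
  have "scl (of_int (m - n) * phid (m + n)) v = d m (d n v) - d n (d m v)"
    using bracket_d_d[OF mn, of v] assms(2)[of "m + n"] mn by simp
  also have "\<dots> = 0" using mn by (simp add: assms(2) pair.linear_scale linear_d mult.commute)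
  finally show "of_int (m - n) * phid (m + n) = 0" using assms(1) by simp
next
  fix m k :: int
  assume mk: "m \<ge> 1" "k \<ge> 0"
  have "scl (- (of_int k + 1/2) * phih (m + k)) v = d m (h k v) - h k (d m v)"
    using bracket_d_h[OF mk, of v] assms(3)[of "m + k"] mk by simp
  also have "\<dots> = 0"
    using mk by (simp add: assms(2,3) pair.linear_scale linear_d linear_h mult.commute)
  finally show "- (of_int k + 1/2) * phih (m + k) = 0" using assms(1) by simp
qed

lemma Whittaker_module_of_eigenvector:
  assumes "D_generated_by scl d h c1 c2 v" "v \<noteq> 0"
    and "\<forall>n\<ge>1. \<exists>c. d n v = scl c v" "\<forall>k\<ge>0. \<exists>c. h k v = scl c v"
  shows "Whittaker_module scl d h c1 c2"
proof -
  obtain phid where phid: "\<forall>n\<ge>1. d n v = scl (phid n) v" using assms(3) by metis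
  obtain phih where phih: "\<forall>k\<ge>0. h k v = scl (phih k) v" using assms(4) by metis
  have "Dplus_lie_hom phid phih" using eigenvalues_lie_hom[of v phid phih] assms(2) phid phih by blast
  then show ?thesis unfolding Whittaker_module_def using assms(1,2) phid phih by blast
qed

end

locale finite_Dplus_submodule = Dplus_module scl d h for scl :: "complex \<Rightarrow> 'v::ab_group_add \<Rightarrow> 'v" and d h +
  fixes W :: "'v set"
  assumes subspace_W: "subspace W" and finite_dim_W: "finite_dim W"
    and d_W: "n \<ge> 1 \<Longrightarrow> d n ` W \<subseteq> W" and h_W: "k \<ge> 0 \<Longrightarrow> h k ` W \<subseteq> W"
begin

lemma d_relation_bracket:
  assumes "\<forall>w\<in>W. poly_comb p (\<lambda>i. scl (a i) (d (f i) w)) = 0" "\<And>i. f i \<ge> 1" "m \<ge> 1"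
  shows "\<forall>w\<in>W. poly_comb p (\<lambda>i. scl (a i * of_int (m - f i)) (d (f i + m) w)) = 0"
proof
  fix w assume w: "w \<in> W"
  have "poly_comb p (\<lambda>i. scl (a i * of_int (m - f i)) (d (f i + m) w)) =
      poly_comb p (\<lambda>i. scl (a i) (d m (d (f i) w) - d (f i) (d m w)))"
    by (simp add: bracket_d_d[OF assms(3,2)] add.commute)
  also have "\<dots> = d m (poly_comb p (\<lambda>i. scl (a i) (d (f i) w))) -
      poly_comb p (\<lambda>i. scl (a i) (d (f i) (d m w)))"
    using assms(2,3) by (simp add: poly_comb_diff_right scale_right_diff_distrib poly_comb_linear
        linear_d pair.linear_scale)
  also have "\<dots> = 0"
    using assms(1,3) w d_W[OF assms(3)] pair.linear_0[OF linear_d] by auto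
  finally show "poly_comb p (\<lambda>i. scl (a i * of_int (m - f i)) (d (f i + m) w)) = 0" .
qed

lemma d_relation_pderiv:
  assumes "s \<ge> 1" "\<forall>w\<in>W. poly_comb p (\<lambda>i. d (s + int i) w) = 0"
  shows "\<forall>w\<in>W. poly_comb (pderiv p) (\<lambda>i. d (s + 5 + int i) w) = 0"
proof
  fix w assume w: "w \<in> W"
  have rel: "\<forall>w\<in>W. poly_comb p (\<lambda>i. scl 1 (d (s + int i) w)) = 0" using assms(2) by simp
  have ge1: "s + int i \<ge> 1" "s + int i + 1 \<ge> 1" "s + int i + 2 \<ge> 1" for i
    using assms(1) by auto
  define D where "D i = d (s + int i + 4) w" for i
  define a1 :: "nat \<Rightarrow> complex" where "a1 i = of_int (4 - (s + int i))" for i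
  define a2 :: "nat \<Rightarrow> complex" where "a2 i = of_int (1 - (s + int i)) * of_int (3 - (s + int i + 1))" for i
  define a3 :: "nat \<Rightarrow> complex" where "a3 i = of_int (2 - (s + int i)) * of_int (2 - (s + int i + 2))" for i
  have r1: "poly_comb p (\<lambda>i. scl (a1 i) (D i)) = 0"
    using d_relation_bracket[OF rel ge1(1), of 4] w by (simp add: a1_def D_def)
  have r2: "poly_comb p (\<lambda>i. scl (a2 i) (D i)) = 0"
    using d_relation_bracket[OF d_relation_bracket[OF rel ge1(1), of 1] ge1(2), of 3] w
    by (simp add: a2_def D_def add.assoc)
  have r3: "poly_comb p (\<lambda>i. scl (a3 i) (D i)) = 0"
    using d_relation_bracket[OF d_relation_bracket[OF rel ge1(1), of 2] ge1(3), of 2] w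
    by (simp add: a3_def D_def add.assoc)
  (* Bracketing with d_4, with d_1 then d_3, and with d_2 then d_2 gives, for f = s + i, the weights
     4 - f, (1 - f)(2 - f) and (2 - f)(-f), whose span contains f - s = i. *)
  define \<alpha> :: complex where "\<alpha> = 1 - of_int s / 2"
  define \<beta> :: complex where "\<beta> = (of_int s - 4) / 2"
  have "of_nat i = \<alpha> * a1 i + \<beta> * a2 i - \<beta> * a3 i" for i
    by (simp add: \<alpha>_def \<beta>_def a1_def a2_def a3_def field_simps)
  then have "poly_comb p (\<lambda>i. scl (of_nat i) (D i)) = poly_comb p (\<lambda>i.
      scl \<alpha> (scl (a1 i) (D i)) + scl \<beta> (scl (a2 i) (D i)) - scl \<beta> (scl (a3 i) (D i)))"
    by (simp add: scale_left_distrib scale_left_diff_distrib)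
  also have "\<dots> = 0"
    by (simp only: poly_comb_add_right poly_comb_diff_right poly_comb_scale_right r1 r2 r3) simp
  finally show "poly_comb (pderiv p) (\<lambda>i. d (s + 5 + int i) w) = 0"
    by (simp add: poly_comb_pderiv D_def add_ac)
qed

lemma d_relation_imp_vanishing:
  assumes "p \<noteq> 0" "s \<ge> 1" "\<forall>w\<in>W. poly_comb p (\<lambda>i. d (s + int i) w) = 0"
  shows "\<exists>N\<ge>1. \<forall>w\<in>W. d N w = 0"
  using assms
proof (induction "degree p" arbitrary: p s rule: less_induct)
  case less
  show ?case
  proof (cases "degree p = 0")
    case True
    then have "scl (coeff p 0) (d s w) = 0" if "w \<in> W" for w
      using bspec[OF less.prems(3) that] True by (simp add: poly_comb_const)
    moreover have "coeff p 0 \<noteq> 0" using True less.prems(1) leading_coeff_0_iff by fastforce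
    ultimately show ?thesis using less.prems(2) by auto
  next
    case False
    then show ?thesis
      using less.hyps[of "pderiv p" "s + 5"] d_relation_pderiv[OF less.prems(2,3)] less.prems(2)
      by (simp add: degree_pderiv pderiv_eq_0_iff)
  qed
qed

lemma some_d_vanishes: "\<exists>N\<ge>1. \<forall>w\<in>W. d N w = 0"
proof -
  obtain p where "p \<noteq> 0" "\<forall>w\<in>W. poly_comb p (\<lambda>i. d (1 + int i) w) = 0"
    using operators_poly_relation[of W "\<lambda>i. d (1 + int i)"] subspace_W finite_dim_W linear_d d_W
    by auto
  then show ?thesis using d_relation_imp_vanishing[of p 1] by simp
qed

lemma d_h_vanish_above:
  assumes "N \<ge> 1" "\<forall>w\<in>W. d N w = 0" "w \<in> W"
  shows "n > 2 * N \<Longrightarrow> d n w = 0" and "k \<ge> N \<Longrightarrow> h k w = 0"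
proof -
  assume n: "n > 2 * N"
  have "scl (of_int (n - 2 * N)) (d n w) = d (n - N) (d N w) - d N (d (n - N) w)"
    using bracket_d_d[of "n - N" N w] assms(1) n by simp
  also have "\<dots> = 0"
    using assms d_W[of "n - N"] n pair.linear_0[OF linear_d, of "n - N"] by auto
  finally have "scl (of_int (n - 2 * N)) (d n w) = 0" .
  moreover have "(of_int (n - 2 * N) :: complex) \<noteq> 0" using n by (simp only: of_int_eq_0_iff)
  ultimately show "d n w = 0" by (metis scale_eq_0_iff)
next
  assume k: "k \<ge> N"
  have "scl (- (of_int (k - N) + 1/2)) (h k w) = d N (h (k - N) w) - h (k - N) (d N w)"
    using bracket_d_h[of N "k - N" w] assms(1) k by simp
  also have "\<dots> = 0"
    using assms h_W[of "k - N"] k pair.linear_0[OF linear_h, of "k - N"] by auto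
  finally show "h k w = 0" using half_integer_nonzero[of "k - N"] by (metis scale_eq_0_iff neg_equal_0_iff_equal)
qed

(* With d_n of degree 2n and h_(k+1/2) of degree 2k+1: the vectors of W killed by every generator of
   degree at least t other than d_1, d_2, h_(1/2). *)
definition annihilated_from :: "int \<Rightarrow> 'v set" where
  "annihilated_from t =
    {w\<in>W. (\<forall>n\<ge>3. t \<le> 2 * n \<longrightarrow> d n w = 0) \<and> (\<forall>k\<ge>1. t \<le> 2 * k + 1 \<longrightarrow> h k w = 0)}"

lemma annihilated_from_subset: "annihilated_from t \<subseteq> W"
  by (auto simp: annihilated_from_def)

lemma subspace_annihilated_from: "subspace (annihilated_from t)"
  using subspace_W unfolding subspace_def annihilated_from_def
  by (auto simp: pair.linear_add pair.linear_scale pair.linear_0 linear_d linear_h)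

lemma finite_dim_annihilated_from: "finite_dim (annihilated_from t)"
  using finite_dim_subset[OF finite_dim_W annihilated_from_subset] .

lemma annihilated_from_d_closed:
  assumes "m \<ge> 1"
  shows "d m ` annihilated_from t \<subseteq> annihilated_from t"
proof (rule image_subsetI)
  fix w assume w: "w \<in> annihilated_from t"
  have "d n (d m w) = 0" if "n \<ge> 3" "t \<le> 2 * n" for n
    using bracket_d_d[of n m w] assms w that pair.linear_0[OF linear_d, of m]
    by (simp add: annihilated_from_def)
  moreover have "h k (d m w) = 0" if "k \<ge> 1" "t \<le> 2 * k + 1" for k
    using bracket_d_h[of m k w] assms w that pair.linear_0[OF linear_d, of m]
    by (simp add: annihilated_from_def)
  ultimately show "d m w \<in> annihilated_from t"
    using assms w d_W[of m] by (auto simp: annihilated_from_def)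
qed

lemma annihilated_from_h_closed:
  assumes "l \<ge> 0"
  shows "h l ` annihilated_from t \<subseteq> annihilated_from t"
proof (rule image_subsetI)
  fix w assume w: "w \<in> annihilated_from t"
  have "d n (h l w) = 0" if "n \<ge> 3" "t \<le> 2 * n" for n
    using bracket_d_h[of n l w] assms w that pair.linear_0[OF linear_h, of l]
    by (simp add: annihilated_from_def)
  moreover have "h k (h l w) = 0" if "k \<ge> 1" "t \<le> 2 * k + 1" for k
    using bracket_h_h[of k l w] assms w that pair.linear_0[OF linear_h, of l]
    by (simp add: annihilated_from_def)
  ultimately show "h l w \<in> annihilated_from t"
    using assms w h_W[of l] by (auto simp: annihilated_from_def)
qed

lemma annihilated_from_even:
  assumes "n \<ge> 3"
  shows "annihilated_from (2 * n) = {w\<in>annihilated_from (2 * n + 1). d n w = 0}"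
proof -
  have "2 * n \<le> 2 * n' \<longleftrightarrow> n' = n \<or> 2 * n + 1 \<le> 2 * n'" for n' :: int by auto
  moreover have "2 * n \<le> 2 * k + 1 \<longleftrightarrow> 2 * n + 1 \<le> 2 * k + 1" for k :: int by auto
  ultimately show ?thesis using assms by (auto simp: annihilated_from_def)
qed

lemma annihilated_from_odd:
  assumes "k \<ge> 1"
  shows "annihilated_from (2 * k + 1) = {w\<in>annihilated_from (2 * k + 2). h k w = 0}"
proof -
  have "2 * k + 1 \<le> 2 * n \<longleftrightarrow> 2 * k + 2 \<le> 2 * n" for n :: int by presburger
  moreover have "2 * k + 1 \<le> 2 * k' + 1 \<longleftrightarrow> k' = k \<or> 2 * k + 2 \<le> 2 * k' + 1" for k' :: int by auto
  ultimately show ?thesis using assms by (auto simp: annihilated_from_def)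
qed

lemma annihilated_from_4: "annihilated_from 4 = annihilated_from 5"
proof -
  have "4 \<le> 2 * k + 1 \<longleftrightarrow> 5 \<le> 2 * k + 1" for k :: int by auto
  then show ?thesis by (auto simp: annihilated_from_def)
qed

lemma annihilated_from_even_nonzero:
  assumes "n \<ge> 3" "u \<in> annihilated_from (2 * n + 1)" "u \<noteq> 0"
  shows "\<exists>w\<in>annihilated_from (2 * n). w \<noteq> 0"
proof -
  let ?U = "annihilated_from (2 * n + 1)"
  have "d 1 (d (n - 1) x) - d (n - 1) (d 1 x) = scl (of_int (2 - n)) (d n x)" for x
    using bracket_d_d[of 1 "n - 1" x] assms(1) by simp
  moreover have "d n (d 1 x) = d 1 (d n x)" if "x \<in> ?U" for x
    using bracket_d_d[of n 1 x] assms(1) that by (simp add: annihilated_from_def)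
  moreover have "d n (d (n - 1) x) = d (n - 1) (d n x)" if "x \<in> ?U" for x
    using bracket_d_d[of n "n - 1" x] assms(1) that by (simp add: annihilated_from_def)
  ultimately have "\<exists>w\<in>?U. w \<noteq> 0 \<and> d n w = 0"
    using assms
    by (intro commutator_kernel[of ?U u "d 1" "d (n - 1)" "d n" "of_int (2 - n)"])
      (simp_all add: subspace_annihilated_from finite_dim_annihilated_from linear_d
        annihilated_from_d_closed)
  then show ?thesis using annihilated_from_even[OF assms(1)] by auto
qed

lemma annihilated_from_odd_nonzero:
  assumes "k \<ge> 1" "u \<in> annihilated_from (2 * k + 2)" "u \<noteq> 0"
  shows "\<exists>w\<in>annihilated_from (2 * k + 1). w \<noteq> 0"
proof -
  let ?U = "annihilated_from (2 * k + 2)"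
  have "d 1 (h (k - 1) x) - h (k - 1) (d 1 x) = scl (- (of_int (k - 1) + 1/2)) (h k x)" for x
    using bracket_d_h[of 1 "k - 1" x] assms(1) by simp
  moreover have "h k (d 1 x) = d 1 (h k x)" if "x \<in> ?U" for x
    using bracket_d_h[of 1 k x] assms(1) that by (simp add: annihilated_from_def)
  moreover have "h k (h (k - 1) x) = h (k - 1) (h k x)" for x
    using bracket_h_h[of k "k - 1" x] assms(1) by simp
  ultimately have "\<exists>w\<in>?U. w \<noteq> 0 \<and> h k w = 0"
    using assms half_integer_nonzero[of "k - 1"]
    by (intro commutator_kernel[of ?U u "d 1" "h (k - 1)" "h k" "- (of_int (k - 1) + 1/2)"])
      (simp_all add: subspace_annihilated_from finite_dim_annihilated_from linear_d linear_h
        annihilated_from_d_closed annihilated_from_h_closed)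
  then show ?thesis using annihilated_from_odd[OF assms(1)] by auto
qed

lemma annihilated_from_step:
  assumes "t \<ge> 3" "u \<in> annihilated_from (t + 1)" "u \<noteq> 0"
  shows "\<exists>w\<in>annihilated_from t. w \<noteq> 0"
proof -
  have "t = 4 \<or> (\<exists>n. t = 2 * n \<and> n \<ge> 3) \<or> (\<exists>k. t = 2 * k + 1 \<and> k \<ge> 1)"
    using assms(1) by presburger
  then show ?thesis
    using assms annihilated_from_4 annihilated_from_even_nonzero annihilated_from_odd_nonzero
    by (auto simp: add.assoc)
qed

lemma annihilated_from_3_nonzero:
  assumes "w \<in> W" "w \<noteq> 0"
  shows "\<exists>u\<in>annihilated_from 3. u \<noteq> 0"
proof -
  obtain N where N: "N \<ge> 1" "\<forall>w\<in>W. d N w = 0" using some_d_vanishes by blast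
  have top: "W \<subseteq> annihilated_from (4 * N + 2)"
    using d_h_vanish_above[OF N] by (auto simp: annihilated_from_def)
  have "3 \<le> t \<longrightarrow> (\<exists>u\<in>annihilated_from t. u \<noteq> 0)" if "t \<le> 4 * N + 2" for t
    using that
  proof (induction t rule: int_le_induct)
    case base
    then show ?case using top assms by blast
  next
    case (step i)
    then show ?case using annihilated_from_step[of "i - 1"] by auto
  qed
  then show ?thesis using N(1) by auto
qed

lemma common_eigenvector_Dplus:
  assumes "w \<in> W" "w \<noteq> 0"
  shows "\<exists>v\<in>W. v \<noteq> 0 \<and> (\<forall>n\<ge>1. \<exists>c. d n v = scl c v) \<and> (\<forall>k\<ge>0. \<exists>c. h k v = scl c v)"
proof -
  let ?U = "annihilated_from 3" and ?Ts = "{d 1, d 2, h 0}"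
  obtain u where u: "u \<in> ?U" "u \<noteq> 0" using annihilated_from_3_nonzero[OF assms] by blast
  have "d 1 (d 2 x) = d 2 (d 1 x)" "d 1 (h 0 x) = h 0 (d 1 x)" "d 2 (h 0 x) = h 0 (d 2 x)"
    if "x \<in> ?U" for x
    using bracket_d_d[of 1 2 x] bracket_d_h[of 1 0 x] bracket_d_h[of 2 0 x] that
    by (simp_all add: annihilated_from_def)
  then have commute: "S (T x) = T (S x)" if "S \<in> ?Ts" "T \<in> ?Ts" "x \<in> ?U" for S T x
    using that by auto
  have ops: "linear_op T" "T ` ?U \<subseteq> ?U" if "T \<in> ?Ts" for T
    using that linear_d[of 1] linear_d[of 2] linear_h[of 0] annihilated_from_d_closed[of 1 3]
      annihilated_from_d_closed[of 2 3] annihilated_from_h_closed[of 0 3]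
    by auto
  have "\<exists>v\<in>?U. v \<noteq> 0 \<and> (\<forall>T\<in>?Ts. \<exists>c. T v = scl c v)"
    by (rule common_eigenvector[OF _ subspace_annihilated_from finite_dim_annihilated_from u])
      (simp_all add: ops commute)
  then obtain v where v: "v \<in> ?U" "v \<noteq> 0" "\<forall>T\<in>?Ts. \<exists>c. T v = scl c v"
    by blast
  have "\<exists>c. d n v = scl c v" if "n \<ge> 1" for n
  proof -
    have "n = 1 \<or> n = 2 \<or> d n v = scl 0 v"
      using that v(1) by (cases "n \<ge> 3") (auto simp: annihilated_from_def)
    then show ?thesis using v(3) by blast
  qed
  moreover have "\<exists>c. h k v = scl c v" if "k \<ge> 0" for k
  proof -
    have "k = 0 \<or> h k v = scl 0 v"
      using that v(1) by (cases "k \<ge> 1") (auto simp: annihilated_from_def)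
    then show ?thesis using v(3) by blast
  qed
  ultimately show ?thesis using v annihilated_from_subset by blast
qed

end

lemma D_module_Dplus_module:
  assumes "D_module scl d h c1 c2"
  shows "Dplus_module scl d h"
proof -
  have "vector_space scl" and linear: "\<forall>m. Vector_Spaces.linear scl scl (d m)"
      "\<forall>k. Vector_Spaces.linear scl scl (h k)"
    and dd: "\<forall>m n x. d m (d n x) - d n (d m x) = scl (of_int (m - n)) (d (m + n) x) +
        (if m + n = 0 then scl (of_int (m^3 - m) / 12) (c1 x) else 0)"
    and dh: "\<forall>m k x. d m (h k x) - h k (d m x) = scl (- (of_int k + 1/2)) (h (m + k) x)"
    and hh: "\<forall>k l x. h k (h l x) - h l (h k x) =
        (if k + l + 1 = 0 then scl (of_int k + 1/2) (c2 x) else 0)"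
    using assms unfolding D_module_def by blast+
  then have "complex_vector_space scl" by (simp add: complex_vector_space_def)
  then show ?thesis
  proof (rule Dplus_module.intro, intro Dplus_module_axioms.intro)
    show "Vector_Spaces.linear scl scl (d n)" "Vector_Spaces.linear scl scl (h k)" for n k
      using linear by blast+
    show "d m (d n x) - d n (d m x) = scl (of_int (m - n)) (d (m + n) x)"
      if "m \<ge> 1" "n \<ge> 1" for m n x
      using dd[rule_format, of m n x] that by simp
    show "d m (h k x) - h k (d m x) = scl (- (of_int k + 1/2)) (h (m + k) x)" for m k x
      using dh by blast
    show "h k (h l x) = h l (h k x)" if "k \<ge> 0" "l \<ge> 0" for k l x
      using hh[rule_format, of k l x] that by simp
  qed
qed

lemma D_simple_generated_by: "D_simple scl d h c1 c2 \<Longrightarrow> v \<noteq> 0 \<Longrightarrow> D_generated_by scl d h c1 c2 v"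
  by (auto simp: D_simple_def D_generated_by_def)

theorem theorem6p3:
  fixes scl :: "complex \<Rightarrow> 'v::ab_group_add \<Rightarrow> 'v"
    and d h :: "int \<Rightarrow> 'v \<Rightarrow> 'v" and c1 c2 :: "'v \<Rightarrow> 'v"
  assumes "D_module scl d h c1 c2"
    and "\<exists>x::'v. x \<noteq> 0"
    and "Dplus_locally_finite scl d h"
  shows "(\<exists>v. v \<noteq> 0 \<and> (\<forall>n\<ge>1. d n v \<in> module.span scl {v}) \<and>
                      (\<forall>k\<ge>0. h k v \<in> module.span scl {v})) \<and>
         (D_simple scl d h c1 c2 \<longrightarrow>
           Whittaker_module scl d h c1 c2 \<or> highest_weight_module scl d h c1 c2)"
proof -
  interpret Dplus_module scl d h using D_module_Dplus_module[OF assms(1)] .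
  obtain x :: 'v where "x \<noteq> 0" using assms(2) by blast
  then obtain W B where W: "subspace W" "x \<in> W" "finite B" "W = span B"
    "\<forall>n\<ge>1. \<forall>x\<in>W. d n x \<in> W" "\<forall>k\<ge>0. \<forall>x\<in>W. h k x \<in> W"
    using assms(3) unfolding Dplus_locally_finite_def by blast
  interpret finite_Dplus_submodule scl d h W
    by unfold_locales (use W in \<open>auto simp: finite_dim_def\<close>)
  obtain v where v: "v \<noteq> 0" "\<forall>n\<ge>1. \<exists>c. d n v = scl c v" "\<forall>k\<ge>0. \<exists>c. h k v = scl c v"
    using common_eigenvector_Dplus[OF W(2) \<open>x \<noteq> 0\<close>] by blast
  then have "v \<noteq> 0 \<and> (\<forall>n\<ge>1. d n v \<in> span {v}) \<and> (\<forall>k\<ge>0. h k v \<in> span {v})"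
    by (auto simp: span_singleton)
  (* The first alternative always holds: the eigenvalue map of v is a possibly zero Lie homomorphism. *)
  moreover have "D_simple scl d h c1 c2 \<longrightarrow> Whittaker_module scl d h c1 c2"
    using Whittaker_module_of_eigenvector D_simple_generated_by v by blast
  ultimately show ?thesis by blast
qed

end
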